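(* $\mathfrak{b}\leq\mathfrak{a}(conv)$.
   Context: $conv$ is the ideal on $\mathbb{Q}\cap[0,1]$ generated by (the ranges of) sequences in $\mathbb{Q}\cap[0,1]$ which converge in $[0,1]$, i.e. $A\in conv$ iff $A$ is covered by finitely many convergent sequences (together with a finite set). For an ideal $\mathcal{J}$ on a countable set, $\mathfrak{a}(\mathcal{J})$ is the smallest size of an uncountable family $\mathcal{A}$ of $\mathcal{J}$-positive sets (sets not in $\mathcal{J}$) which is maximal with respect to the property that $A\cap B\in\mathcal{J}$ for all distinct $A,B\in\mathcal{A}$. $\mathfrak{b}$ is the bounding number. *)

theory Defs
  imports Complex_Main "HOL-Library.Countable_Set"
begin

definition Q01 :: "rat set" where
  "Q01 = {q. 0 \<le> q \<and> q \<le> 1}"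

definition conv_seq :: "(nat \<Rightarrow> rat) \<Rightarrow> bool" where
  "conv_seq s \<longleftrightarrow> range s \<subseteq> Q01 \<and> convergent (\<lambda>n. real_of_rat (s n))"

definition conv_ideal :: "rat set set" where
  "conv_ideal = {A. A \<subseteq> Q01 \<and> (\<exists>S F. finite S \<and> finite F \<and> (\<forall>s\<in>S. conv_seq s)
                       \<and> A \<subseteq> F \<union> (\<Union>s\<in>S. range s))}"

definition positive_for :: "'a set \<Rightarrow> 'a set set \<Rightarrow> 'a set \<Rightarrow> bool" where
  "positive_for X J A \<longleftrightarrow> A \<subseteq> X \<and> A \<notin> J"

definition uncountable_MAD :: "'a set \<Rightarrow> 'a set set \<Rightarrow> 'a set set \<Rightarrow> bool" where
  "uncountable_MAD X J \<A> \<longleftrightarrow>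
     \<not> countable \<A> \<and>
     (\<forall>A\<in>\<A>. positive_for X J A) \<and>
     (\<forall>A\<in>\<A>. \<forall>B\<in>\<A>. A \<noteq> B \<longrightarrow> A \<inter> B \<in> J) \<and>
     (\<forall>B. positive_for X J B \<and> B \<notin> \<A> \<longrightarrow> (\<exists>A\<in>\<A>. A \<inter> B \<notin> J))"

definition unbounded_family :: "(nat \<Rightarrow> nat) set \<Rightarrow> bool" where
  "unbounded_family F \<longleftrightarrow> \<not> (\<exists>g. \<forall>f\<in>F. \<forall>\<^sub>F n in sequentially. f n \<le> g n)"

end

theory Submission
  imports Defs "HOL-Analysis.Analysis"
begin

(*
  A set of rationals in [0,1] belongs to conv exactly when it has only finitely many limit points
  in the reals. Disjointifying countably many members of an uncountable MAD family \<A> gives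
  conv-positive pieces D n, each with infinitely many limit points; after passing to a subsequence,
  accumulation points v n of the limit points of D n converge to some w, and limit points z n k of
  D n converge to v n as k grows. Each A in \<A> meets almost every D n in a conv set, so only
  finitely many z n k are limit points of A \<inter> D n, and f A n bounds their indices. If one g
  dominated every f A, then sequences in D n converging to z n (g n) would form a conv-positive set
  B (its limit points accumulate at w) that is conv-almost disjoint from every member of \<A>,
  contradicting maximality.
*)

section \<open>Limit points and approximating sequences\<close>

lemma limpt_in_closed: "closed S \<Longrightarrow> T \<subseteq> S \<Longrightarrow> p islimpt T \<Longrightarrow> p \<in> S"
  using closed_limpt islimpt_subset by blast

lemma islimpt_image_approximating_seq:
  fixes f :: "'a \<Rightarrow> 'b::metric_space"
  assumes "v islimpt f ` S"
  shows "\<exists>z. \<forall>k. z k \<in> S \<and> f (z k) \<noteq> v \<and> dist (f (z k)) v < inverse (real (Suc k))"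
proof -
  have "\<exists>x. x \<in> S \<and> f x \<noteq> v \<and> dist (f x) v < inverse (real (Suc k))" for k
  proof -
    have "inverse (real (Suc k)) > 0"
      by simp
    then obtain y where "y \<in> f ` S" "y \<noteq> v" "dist y v < inverse (real (Suc k))"
      using assms unfolding islimpt_approachable by blast
    then show ?thesis
      by blast
  qed
  then show ?thesis
    by (intro choice allI)
qed

lemma tendsto_if_dist_less_inverse_Suc:
  fixes z v :: "nat \<Rightarrow> 'a::real_normed_vector"
  assumes "v \<longlonglongrightarrow> l" "\<And>k. dist (z k) (v k) < inverse (real (Suc k))"
  shows "z \<longlonglongrightarrow> l"
proof (rule Lim_transform[OF assms(1)])
  show "(\<lambda>k. z k - v k) \<longlonglongrightarrow> 0"
  proof (rule Lim_null_comparison)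
    show "\<forall>\<^sub>F k in sequentially. norm (z k - v k) \<le> inverse (real (Suc k))"
      using assms(2) by (intro always_eventually allI) (simp add: dist_norm less_imp_le)
    show "(\<lambda>k. inverse (real (Suc k))) \<longlonglongrightarrow> 0"
      by (rule LIMSEQ_inverse_real_of_nat)
  qed
qed

lemma tendsto_diagonal_if_dist_less_inverse_Suc:
  fixes z :: "nat \<Rightarrow> nat \<Rightarrow> 'a::real_normed_vector"
  assumes v: "v \<longlonglongrightarrow> w" and z: "\<And>n k. dist (z n k) (v n) < inverse (real (Suc k))"
    and h: "\<And>n. h n \<ge> n"
  shows "(\<lambda>n. z n (h n)) \<longlonglongrightarrow> w"
proof (rule tendsto_if_dist_less_inverse_Suc[OF v])
  fix n
  have "inverse (real (Suc (h n))) \<le> inverse (real (Suc n))"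
    using h[of n] by (auto intro!: le_imp_inverse_le)
  then show "dist (z n (h n)) (v n) < inverse (real (Suc n))"
    using z[of n "h n"] by linarith
qed

lemma finite_vimage_if_tendsto_avoiding:
  fixes z :: "nat \<Rightarrow> 'a::metric_space"
  assumes "z \<longlonglongrightarrow> v" "\<And>k. z k \<noteq> v" "finite P"
  shows "finite {k. z k \<in> P}"
proof -
  obtain d where d: "d > 0" "\<And>x. x \<in> P \<Longrightarrow> x \<noteq> v \<Longrightarrow> d \<le> dist v x"
    using finite_set_avoid[OF assms(3)] by blast
  obtain N where N: "\<And>k. k \<ge> N \<Longrightarrow> dist (z k) v < d"
    using assms(1) d(1) unfolding LIMSEQ_def by blast
  have "{k. z k \<in> P} \<subseteq> {..<N}"
  proof
    fix k assume "k \<in> {k. z k \<in> P}"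
    then have "d \<le> dist (z k) v"
      using d(2)[of "z k"] assms(2)[of k] by (simp add: dist_commute)
    then show "k \<in> {..<N}"
      by (meson N lessThan_iff not_le not_less)
  qed
  then show ?thesis
    by (rule finite_subset) simp
qed

lemma islimpt_image_if_tendsto:
  fixes f :: "nat \<Rightarrow> 'a::metric_space"
  assumes "f \<longlonglongrightarrow> y" "\<And>i. f i \<noteq> y" "infinite I"
  shows "y islimpt f ` I"
  unfolding islimpt_approachable
proof (intro allI impI)
  fix e :: real assume "e > 0"
  then obtain N where N: "\<And>i. i \<ge> N \<Longrightarrow> dist (f i) y < e"
    using assms(1) unfolding LIMSEQ_def by blast
  obtain i where "i \<in> I" "i \<ge> N"
    using assms(3) unfolding infinite_nat_iff_unbounded_le by blast
  then show "\<exists>x'\<in>f ` I. x' \<noteq> y \<and> dist x' y < e"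
    using N assms(2) by blast
qed

lemma eventually_dist_less_if_close:
  fixes y :: "nat \<Rightarrow> 'a::metric_space"
  assumes y: "y \<longlonglongrightarrow> w" and close: "\<And>n x. x \<in> S n \<Longrightarrow> dist (f x) (y n) < inverse (real (Suc n))"
    and "e > 0"
  shows "\<forall>\<^sub>F n in sequentially. \<forall>x\<in>S n. dist (f x) w < e"
proof -
  have "\<forall>\<^sub>F n in sequentially. dist (y n) w < e/2"
    using \<open>e > 0\<close> by (intro tendstoD[OF y]) simp
  moreover have "\<forall>\<^sub>F n in sequentially. inverse (real (Suc n)) < e/2"
    using \<open>e > 0\<close> by (intro order_tendstoD(2)[OF LIMSEQ_inverse_real_of_nat]) simp
  ultimately show ?thesis
  proof eventually_elim
    case (elim n)
    show ?case
    proof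
      fix x assume "x \<in> S n"
      then have "dist (f x) (y n) < inverse (real (Suc n))"
        by (rule close)
      then show "dist (f x) w < e"
        using elim dist_triangle[of "f x" w "y n"] by linarith
    qed
  qed
qed

section \<open>Ideals of sets and almost disjoint families\<close>

definition set_ideal :: "'a set set \<Rightarrow> bool" where
  "set_ideal J \<longleftrightarrow> {} \<in> J \<and> (\<forall>A B. B \<in> J \<longrightarrow> A \<subseteq> B \<longrightarrow> A \<in> J)
     \<and> (\<forall>A B. A \<in> J \<longrightarrow> B \<in> J \<longrightarrow> A \<union> B \<in> J)"

lemma set_ideal_empty: "set_ideal J \<Longrightarrow> {} \<in> J"
  unfolding set_ideal_def by blast

lemma set_ideal_subset: "set_ideal J \<Longrightarrow> B \<in> J \<Longrightarrow> A \<subseteq> B \<Longrightarrow> A \<in> J"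
  unfolding set_ideal_def by blast

lemma set_ideal_Un: "set_ideal J \<Longrightarrow> A \<in> J \<Longrightarrow> B \<in> J \<Longrightarrow> A \<union> B \<in> J"
  unfolding set_ideal_def by blast

lemma set_ideal_UN:
  assumes J: "set_ideal J" and "finite I" "\<And>i. i \<in> I \<Longrightarrow> S i \<in> J"
  shows "(\<Union>i\<in>I. S i) \<in> J"
  using assms(2,3)
proof (induction rule: finite_induct)
  case empty
  then show ?case
    using set_ideal_empty[OF J] by simp
next
  case (insert i I)
  then have "S i \<in> J" "(\<Union>i\<in>I. S i) \<in> J"
    by simp_all
  then show ?case
    using set_ideal_Un[OF J] by simp
qed

lemma positive_for_Diff_UN:
  fixes As :: "nat \<Rightarrow> 'a set"
  assumes J: "set_ideal J" and pos: "positive_for X J (As n)"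
    and ad: "\<And>m. m < n \<Longrightarrow> As n \<inter> As m \<in> J"
  shows "positive_for X J (As n - (\<Union>m<n. As m))"
proof -
  have small: "(\<Union>m<n. As n \<inter> As m) \<in> J"
    by (rule set_ideal_UN[OF J]) (simp_all add: ad)
  have "As n - (\<Union>m<n. As m) \<notin> J"
  proof
    assume "As n - (\<Union>m<n. As m) \<in> J"
    then have "(As n - (\<Union>m<n. As m)) \<union> (\<Union>m<n. As n \<inter> As m) \<in> J"
      using small by (rule set_ideal_Un[OF J])
    moreover have "As n \<subseteq> (As n - (\<Union>m<n. As m)) \<union> (\<Union>m<n. As n \<inter> As m)"
      by blast
    ultimately have "As n \<in> J"
      by (rule set_ideal_subset[OF J])
    with pos show False
      unfolding positive_for_def by blast
  qed
  with pos show ?thesis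
    unfolding positive_for_def by blast
qed

lemma eventually_Int_Diff_UN_in_set_ideal:
  fixes As :: "nat \<Rightarrow> 'a set"
  assumes J: "set_ideal J" and A: "A \<in> range As \<or> (\<forall>n. A \<inter> As n \<in> J)"
  shows "\<forall>\<^sub>F n in sequentially. A \<inter> (As n - (\<Union>m<n. As m)) \<in> J"
proof (cases "A \<in> range As")
  case True
  then obtain m where "A = As m"
    by blast
  then have "A \<inter> (As n - (\<Union>m<n. As m)) = {}" if "n \<ge> Suc m" for n
    using that by auto
  then have "\<forall>n\<ge>Suc m. A \<inter> (As n - (\<Union>m<n. As m)) \<in> J"
    using set_ideal_empty[OF J] by simp
  then show ?thesis
    unfolding eventually_sequentially by blast
next
  case False
  with A have "A \<inter> As n \<in> J" for n
    by blast
  then have "A \<inter> (As n - (\<Union>m<n. As m)) \<in> J" for n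
    by (rule set_ideal_subset[OF J]) blast
  then show ?thesis
    by simp
qed

lemma almost_disjoint_family_pieces:
  assumes J: "set_ideal J" and inf: "infinite \<A>" and pos: "\<forall>A\<in>\<A>. positive_for X J A"
    and ad: "\<forall>A\<in>\<A>. \<forall>B\<in>\<A>. A \<noteq> B \<longrightarrow> A \<inter> B \<in> J"
  obtains D where "\<forall>n. positive_for X J (D n)"
    "\<forall>A\<in>\<A>. \<forall>\<^sub>F n in sequentially. A \<inter> D n \<in> J"
proof -
  obtain As :: "nat \<Rightarrow> 'a set" where As: "inj As" "range As \<subseteq> \<A>"
    using infinite_countable_subset[OF inf] by blast
  have As_in: "As m \<in> \<A>" for m
    using As(2) by blast
  have "\<forall>n. positive_for X J (As n - (\<Union>m<n. As m))"
  proof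
    fix n
    show "positive_for X J (As n - (\<Union>m<n. As m))"
    proof (rule positive_for_Diff_UN[OF J])
      show "positive_for X J (As n)"
        using pos As_in by blast
      show "As n \<inter> As m \<in> J" if "m < n" for m
      proof -
        have "As n \<noteq> As m"
          using that injD[OF As(1), of n m] by auto
        then show ?thesis
          by (rule ad[rule_format, OF As_in As_in])
      qed
    qed
  qed
  moreover have "\<forall>A\<in>\<A>. \<forall>\<^sub>F n in sequentially. A \<inter> (As n - (\<Union>m<n. As m)) \<in> J"
  proof
    fix A assume A: "A \<in> \<A>"
    have "A \<in> range As \<or> (\<forall>n. A \<inter> As n \<in> J)"
      using ad A As_in by blast
    then show "\<forall>\<^sub>F n in sequentially. A \<inter> (As n - (\<Union>m<n. As m)) \<in> J"
      by (rule eventually_Int_Diff_UN_in_set_ideal[OF J])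
  qed
  ultimately show thesis
    by (rule that)
qed

definition dominated_sets_escapable ::
    "'a set \<Rightarrow> 'a set set \<Rightarrow> (nat \<Rightarrow> 'a set) \<Rightarrow> ('a set \<Rightarrow> nat \<Rightarrow> nat) \<Rightarrow> bool" where
  "dominated_sets_escapable X J D f \<longleftrightarrow> (\<forall>g. \<exists>B. positive_for X J B \<and>
     (\<forall>A. (\<forall>\<^sub>F n in sequentially. A \<inter> D n \<in> J) \<longrightarrow> (\<forall>\<^sub>F n in sequentially. f A n \<le> g n)
        \<longrightarrow> A \<inter> B \<in> J))"

lemma unbounded_family_if_dominated_sets_escapable:
  assumes MAD: "uncountable_MAD X J \<A>" and small: "\<forall>A\<in>\<A>. \<forall>\<^sub>F n in sequentially. A \<inter> D n \<in> J"
    and esc: "dominated_sets_escapable X J D f"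
  shows "unbounded_family (f ` \<A>)"
  unfolding unbounded_family_def
proof
  assume "\<exists>g. \<forall>h\<in>f ` \<A>. \<forall>\<^sub>F n in sequentially. h n \<le> g n"
  then obtain g where g: "\<And>A. A \<in> \<A> \<Longrightarrow> \<forall>\<^sub>F n in sequentially. f A n \<le> g n"
    by blast
  obtain B where B: "positive_for X J B" and B_ad: "\<forall>A. (\<forall>\<^sub>F n in sequentially. A \<inter> D n \<in> J)
      \<longrightarrow> (\<forall>\<^sub>F n in sequentially. f A n \<le> g n) \<longrightarrow> A \<inter> B \<in> J"
    using esc[unfolded dominated_sets_escapable_def, THEN spec, of g] by blast
  have B_ad_\<A>: "A \<inter> B \<in> J" if "A \<in> \<A>" for A
    using B_ad[rule_format, OF small[rule_format, OF that] g[OF that]] .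
  have "B \<notin> \<A>"
  proof
    assume "B \<in> \<A>"
    then have "B \<inter> B \<in> J"
      by (rule B_ad_\<A>)
    with B show False
      unfolding positive_for_def by simp
  qed
  moreover have "\<forall>B. positive_for X J B \<and> B \<notin> \<A> \<longrightarrow> (\<exists>A\<in>\<A>. A \<inter> B \<notin> J)"
    using MAD unfolding uncountable_MAD_def by blast
  ultimately obtain A where "A \<in> \<A>" "A \<inter> B \<notin> J"
    using B by blast
  with B_ad_\<A> show False
    by blast
qed

section \<open>The ideal conv\<close>

lemma conv_ideal_iff:
  "A \<in> conv_ideal \<longleftrightarrow> A \<subseteq> Q01 \<and> (\<exists>S F. finite S \<and> finite F \<and> (\<forall>s\<in>S. conv_seq s)
                       \<and> A \<subseteq> F \<union> (\<Union>s\<in>S. range s))"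
  unfolding conv_ideal_def by simp

lemma conv_ideal_subset:
  assumes "B \<in> conv_ideal" "A \<subseteq> B"
  shows "A \<in> conv_ideal"
proof -
  obtain S F where S: "finite S" "finite F" "\<forall>s\<in>S. conv_seq s" "B \<subseteq> Q01"
    "B \<subseteq> F \<union> (\<Union>s\<in>S. range s)"
    using assms(1) unfolding conv_ideal_iff by blast
  moreover have "A \<subseteq> F \<union> (\<Union>s\<in>S. range s)" "A \<subseteq> Q01"
    using S(4,5) assms(2) by auto
  ultimately show ?thesis
    unfolding conv_ideal_iff by blast
qed

lemma conv_ideal_Un:
  assumes "A \<in> conv_ideal" "B \<in> conv_ideal"
  shows "A \<union> B \<in> conv_ideal"
proof -
  obtain S F where "finite S" "finite F" "\<forall>s\<in>S. conv_seq s" "A \<subseteq> Q01"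
    "A \<subseteq> F \<union> (\<Union>s\<in>S. range s)"
    using assms(1) unfolding conv_ideal_iff by blast
  moreover obtain S' F' where "finite S'" "finite F'" "\<forall>s\<in>S'. conv_seq s" "B \<subseteq> Q01"
    "B \<subseteq> F' \<union> (\<Union>s\<in>S'. range s)"
    using assms(2) unfolding conv_ideal_iff by blast
  ultimately have "A \<union> B \<subseteq> (F \<union> F') \<union> (\<Union>s\<in>S \<union> S'. range s)" "A \<union> B \<subseteq> Q01"
    "finite (S \<union> S')" "finite (F \<union> F')" "\<forall>s\<in>S \<union> S'. conv_seq s"
    by auto
  then show ?thesis
    unfolding conv_ideal_iff by blast
qed

lemma conv_ideal_finite:
  assumes "finite A" "A \<subseteq> Q01"
  shows "A \<in> conv_ideal"
proof -
  have "A \<subseteq> A \<union> (\<Union>s\<in>{}. range s)"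
    by simp
  then show ?thesis
    unfolding conv_ideal_iff using assms by blast
qed

lemma set_ideal_conv_ideal: "set_ideal conv_ideal"
  unfolding set_ideal_def
proof (intro conjI allI impI)
  show "{} \<in> conv_ideal"
    by (rule conv_ideal_finite) auto
  show "A \<in> conv_ideal" if "B \<in> conv_ideal" "A \<subseteq> B" for A B
    using that by (rule conv_ideal_subset)
  show "A \<union> B \<in> conv_ideal" if "A \<in> conv_ideal" "B \<in> conv_ideal" for A B
    using that by (rule conv_ideal_Un)
qed

lemma range_in_conv_ideal:
  assumes "conv_seq s"
  shows "range s \<in> conv_ideal"
proof -
  have "range s \<subseteq> {} \<union> (\<Union>s\<in>{s}. range s)"
    by simp
  then show ?thesis
    unfolding conv_ideal_iff using assms unfolding conv_seq_def by blast
qed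

lemma conv_ideal_if_far_points_finite:
  assumes X: "X \<subseteq> Q01" and far: "\<And>e. e > 0 \<Longrightarrow> finite {x\<in>X. e \<le> dist (real_of_rat x) w}"
  shows "X \<in> conv_ideal"
proof (cases "finite X")
  case True
  then show ?thesis
    using X by (rule conv_ideal_finite)
next
  case False
  define s where "s = from_nat_into X"
  have bij: "bij_betw s UNIV X"
    unfolding s_def by (rule bij_betw_from_nat_into[OF countable_subset[OF subset_UNIV] False]) simp
  have "(\<lambda>n. real_of_rat (s n)) \<longlonglongrightarrow> w"
  proof (rule tendstoI)
    fix e :: real assume "e > 0"
    have "finite (s -` {x\<in>X. e \<le> dist (real_of_rat x) w})"
      using finite_vimageI[OF far[OF \<open>e > 0\<close>]] bij_betw_imp_inj_on[OF bij] by blast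
    moreover have "{n. \<not> dist (real_of_rat (s n)) w < e} \<subseteq> s -` {x\<in>X. e \<le> dist (real_of_rat x) w}"
      using bij_betw_apply[OF bij] by auto
    ultimately show "\<forall>\<^sub>F n in sequentially. dist (real_of_rat (s n)) w < e"
      unfolding cofinite_eq_sequentially[symmetric] eventually_cofinite by (rule finite_subset[rotated])
  qed
  then have "conv_seq s"
    unfolding conv_seq_def convergent_def using X bij_betw_imp_surj_on[OF bij] by blast
  then show ?thesis
    using range_in_conv_ideal bij_betw_imp_surj_on[OF bij] by metis
qed

lemma conv_ideal_UN_if_tendsto:
  assumes S: "\<And>n. S n \<in> conv_ideal" and fin: "\<forall>\<^sub>F n in sequentially. finite (S n)"
    and close: "\<And>e. e > 0 \<Longrightarrow> \<forall>\<^sub>F n in sequentially. \<forall>x\<in>S n. dist (real_of_rat x) w < e"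
  shows "(\<Union>n. S n) \<in> conv_ideal"
proof -
  obtain N where N: "\<And>n. n \<ge> N \<Longrightarrow> finite (S n)"
    using fin unfolding eventually_sequentially by blast
  have "S n \<subseteq> Q01" for n
    using S[of n] unfolding conv_ideal_iff by blast
  then have "(\<Union>n\<in>{N..}. S n) \<subseteq> Q01"
    by blast
  then have "(\<Union>n\<in>{N..}. S n) \<in> conv_ideal"
  proof (rule conv_ideal_if_far_points_finite)
    fix e :: real assume "e > 0"
    obtain M where M: "\<And>n x. n \<ge> M \<Longrightarrow> x \<in> S n \<Longrightarrow> dist (real_of_rat x) w < e"
      using close[OF \<open>e > 0\<close>] unfolding eventually_sequentially by blast
    have "{x \<in> (\<Union>n\<in>{N..}. S n). e \<le> dist (real_of_rat x) w} \<subseteq> (\<Union>n\<in>{N..<M}. S n)"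
    proof
      fix x assume "x \<in> {x \<in> (\<Union>n\<in>{N..}. S n). e \<le> dist (real_of_rat x) w}"
      then obtain n where "n \<ge> N" "x \<in> S n" "e \<le> dist (real_of_rat x) w"
        by blast
      moreover have "n < M"
        using M calculation(2,3) by (meson not_le not_less)
      ultimately show "x \<in> (\<Union>n\<in>{N..<M}. S n)"
        by auto
    qed
    moreover have "finite (\<Union>n\<in>{N..<M}. S n)"
      using N by auto
    ultimately show "finite {x \<in> (\<Union>n\<in>{N..}. S n). e \<le> dist (real_of_rat x) w}"
      by (rule finite_subset)
  qed
  moreover have "(\<Union>n\<in>{..<N}. S n) \<in> conv_ideal"
    by (rule set_ideal_UN[OF set_ideal_conv_ideal]) (simp_all add: S)
  ultimately have "(\<Union>n\<in>{N..}. S n) \<union> (\<Union>n\<in>{..<N}. S n) \<in> conv_ideal"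
    by (rule conv_ideal_Un)
  moreover have "(\<Union>n. S n) \<subseteq> (\<Union>n\<in>{N..}. S n) \<union> (\<Union>n\<in>{..<N}. S n)"
  proof
    fix x assume "x \<in> (\<Union>n. S n)"
    then obtain n where "x \<in> S n"
      by blast
    then show "x \<in> (\<Union>n\<in>{N..}. S n) \<union> (\<Union>n\<in>{..<N}. S n)"
      by (cases "n < N") auto
  qed
  ultimately show ?thesis
    by (rule conv_ideal_subset)
qed

lemma real_of_rat_Q01: "X \<subseteq> Q01 \<Longrightarrow> real_of_rat ` X \<subseteq> {0..1}"
  unfolding Q01_def by auto

lemma finite_limpts_if_conv_ideal:
  assumes "X \<in> conv_ideal"
  shows "finite {p. p islimpt real_of_rat ` X}"
proof -
  obtain S F where S: "finite S" "finite F" "\<forall>s\<in>S. conv_seq s" "X \<subseteq> F \<union> (\<Union>s\<in>S. range s)"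
    using assms unfolding conv_ideal_iff by blast
  have "p \<in> (\<lambda>s. lim (\<lambda>n. real_of_rat (s n))) ` S" if p: "p islimpt real_of_rat ` X" for p
  proof -
    have "real_of_rat ` X \<subseteq> real_of_rat ` F \<union> (\<Union>s\<in>S. range (\<lambda>n. real_of_rat (s n)))"
      using S(4) by auto
    then have "p islimpt real_of_rat ` F \<union> (\<Union>s\<in>S. range (\<lambda>n. real_of_rat (s n)))"
      by (rule islimpt_subset[OF p])
    moreover have "\<not> p islimpt real_of_rat ` F"
      using S(2) by (simp add: islimpt_finite)
    ultimately have "p islimpt (\<Union>s\<in>S. range (\<lambda>n. real_of_rat (s n)))"
      by (simp add: islimpt_Un)
    then obtain s where s: "s \<in> S" "p islimpt range (\<lambda>n. real_of_rat (s n))"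
      using islimpt_finite_union_iff[OF S(1), of p "\<lambda>s. range (\<lambda>n. real_of_rat (s n))"] by blast
    have "convergent (\<lambda>n. real_of_rat (s n))"
      using S(3) s(1) unfolding conv_seq_def by blast
    then have "(\<lambda>n. real_of_rat (s n)) \<longlonglongrightarrow> lim (\<lambda>n. real_of_rat (s n))"
      by (simp add: convergent_LIMSEQ_iff)
    then have "p = lim (\<lambda>n. real_of_rat (s n))"
      using s(2) by (rule sequence_unique_limpt)
    then show ?thesis
      using s(1) by blast
  qed
  then have "{p. p islimpt real_of_rat ` X} \<subseteq> (\<lambda>s. lim (\<lambda>n. real_of_rat (s n))) ` S"
    by blast
  then show ?thesis
    using S(1) by (rule finite_subset[OF _ finite_imageI])
qed

lemma conv_ideal_if_limpts_subset_singleton: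
  assumes X: "X \<subseteq> Q01" and limpts: "\<And>p. p islimpt real_of_rat ` X \<Longrightarrow> p = w"
  shows "X \<in> conv_ideal"
proof (rule conv_ideal_if_far_points_finite[OF X])
  fix e :: real assume "e > 0"
  define Z where "Z = {x\<in>X. e \<le> dist (real_of_rat x) w}"
  have "Z \<subseteq> X"
    unfolding Z_def by blast
  show "finite Z"
  proof (rule ccontr)
    assume "infinite Z"
    then have "infinite (real_of_rat ` Z)"
      by (metis finite_imageD inj_onI of_rat_eq_iff)
    moreover have "bounded (real_of_rat ` Z)"
      using real_of_rat_Q01[OF order_trans[OF \<open>Z \<subseteq> X\<close> X]]
      by (rule bounded_subset[OF bounded_closed_interval])
    ultimately obtain q where q: "q islimpt real_of_rat ` Z"
      using bounded_infinite_imp_islimpt by blast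
    have "q islimpt real_of_rat ` X"
      using q image_mono[OF \<open>Z \<subseteq> X\<close>] by (rule islimpt_subset)
    then have "q = w"
      by (rule limpts)
    moreover have "real_of_rat ` Z \<subseteq> - ball w e"
      unfolding Z_def by (auto simp: dist_commute)
    then have "q \<in> - ball w e"
      by (rule limpt_in_closed[OF closed_Compl[OF open_ball] _ q])
    ultimately show False
      using \<open>e > 0\<close> by simp
  qed
qed

lemma conv_ideal_cluster_at_isolated_limpt:
  assumes X: "X \<subseteq> Q01" and "d > 0"
    and limpts: "\<And>p. p islimpt real_of_rat ` X \<Longrightarrow> p = x \<or> d \<le> dist x p"
  shows "{q\<in>X. dist (real_of_rat q) x \<le> d/2} \<in> conv_ideal"
proof (rule conv_ideal_if_limpts_subset_singleton)
  show "{q\<in>X. dist (real_of_rat q) x \<le> d/2} \<subseteq> Q01"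
    using X by blast
next
  fix p assume p: "p islimpt real_of_rat ` {q\<in>X. dist (real_of_rat q) x \<le> d/2}"
  have "real_of_rat ` {q\<in>X. dist (real_of_rat q) x \<le> d/2} \<subseteq> cball x (d/2)"
    by (auto simp: dist_commute)
  then have "p \<in> cball x (d/2)"
    by (rule limpt_in_closed[OF closed_cball _ p])
  moreover have "p islimpt real_of_rat ` X"
    using p by (rule islimpt_subset) blast
  then have "p = x \<or> d \<le> dist x p"
    by (rule limpts)
  ultimately show "p = x"
    using \<open>d > 0\<close> by auto
qed

lemma conv_ideal_if_finite_limpts:
  assumes "finite P" "X \<subseteq> Q01" "\<And>p. p islimpt real_of_rat ` X \<Longrightarrow> p \<in> P"
  shows "X \<in> conv_ideal"
  using assms
proof (induction P arbitrary: X rule: finite_induct)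
  case empty
  then show ?case
    using conv_ideal_if_limpts_subset_singleton[of X 0] by blast
next
  case (insert x P)
  obtain d where d: "d > 0" "\<And>y. y \<in> P \<Longrightarrow> y \<noteq> x \<Longrightarrow> d \<le> dist x y"
    using finite_set_avoid[OF insert(1)] by blast
  define X1 where "X1 = {q\<in>X. dist (real_of_rat q) x \<le> d/2}"
  have "X1 \<in> conv_ideal"
    unfolding X1_def
  proof (rule conv_ideal_cluster_at_isolated_limpt[OF insert.prems(1) d(1)])
    fix p assume "p islimpt real_of_rat ` X"
    then show "p = x \<or> d \<le> dist x p"
      using insert.prems(2) d(2) by blast
  qed
  moreover have "X - X1 \<in> conv_ideal"
  proof (rule insert.IH)
    show "X - X1 \<subseteq> Q01"
      using insert.prems(1) by blast
  next
    fix p assume p: "p islimpt real_of_rat ` (X - X1)"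
    have "real_of_rat ` (X - X1) \<subseteq> - ball x (d/2)"
      unfolding X1_def by (auto simp: dist_commute)
    then have "p \<in> - ball x (d/2)"
      by (rule limpt_in_closed[OF closed_Compl[OF open_ball] _ p])
    moreover have "p islimpt real_of_rat ` X"
      using p by (rule islimpt_subset) blast
    then have "p \<in> insert x P"
      by (rule insert.prems(2))
    ultimately show "p \<in> P"
      using d(1) by auto
  qed
  ultimately have "X1 \<union> (X - X1) \<in> conv_ideal"
    by (rule conv_ideal_Un)
  moreover have "X1 \<subseteq> X"
    unfolding X1_def by blast
  ultimately show ?case
    by (simp add: Un_absorb1)
qed

lemma conv_ideal_iff_finite_limpts:
  "X \<subseteq> Q01 \<Longrightarrow> X \<in> conv_ideal \<longleftrightarrow> finite {p. p islimpt real_of_rat ` X}"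
  using finite_limpts_if_conv_ideal conv_ideal_if_finite_limpts by blast

lemma not_conv_ideal_if_limpts_tendsto:
  assumes "\<And>n. y n islimpt real_of_rat ` X" "\<And>n. y n \<noteq> w" "y \<longlonglongrightarrow> w"
  shows "X \<notin> conv_ideal"
proof
  assume "X \<in> conv_ideal"
  then have "finite {n. y n \<in> {p. p islimpt real_of_rat ` X}}"
    by (rule finite_vimage_if_tendsto_avoiding[OF assms(3,2) finite_limpts_if_conv_ideal])
  then show False
    using assms(1) by simp
qed

lemma conv_set_accumulating_at_limpt:
  assumes D: "D \<subseteq> Q01" and y: "y islimpt real_of_rat ` D" and "r > 0"
  shows "\<exists>T. T \<subseteq> D \<and> T \<in> conv_ideal \<and> (\<forall>x\<in>T. dist (real_of_rat x) y < r)
    \<and> y islimpt real_of_rat ` T \<and> (\<forall>A. infinite (A \<inter> T) \<longrightarrow> y islimpt real_of_rat ` (A \<inter> T))"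
proof -
  obtain s where s: "\<forall>k. s k \<in> D \<and> real_of_rat (s k) \<noteq> y
      \<and> dist (real_of_rat (s k)) y < inverse (real (Suc k))"
    using islimpt_image_approximating_seq[OF y] by blast
  have s_tendsto: "(\<lambda>k. real_of_rat (s k)) \<longlonglongrightarrow> y"
    using tendsto_const by (rule tendsto_if_dist_less_inverse_Suc) (use s in blast)
  have limpt: "y islimpt real_of_rat ` s ` I" if "infinite I" for I
  proof -
    have "y islimpt (\<lambda>k. real_of_rat (s k)) ` I"
      by (rule islimpt_image_if_tendsto[OF s_tendsto _ that]) (use s in blast)
    then show ?thesis
      by (simp only: image_image)
  qed
  define I where "I = {k. dist (real_of_rat (s k)) y < r}"
  define T where "T = s ` I"
  obtain N where "\<And>k. k \<ge> N \<Longrightarrow> k \<in> I"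
    using tendstoD[OF s_tendsto \<open>r > 0\<close>] unfolding I_def eventually_sequentially by blast
  then have "{N..} \<subseteq> I"
    by blast
  then have "infinite I"
    using infinite_Ici by (rule infinite_super)
  have "range s \<subseteq> Q01"
    using s D by blast
  then have "conv_seq s"
    unfolding conv_seq_def convergent_def using s_tendsto by blast
  then have "range s \<in> conv_ideal"
    by (rule range_in_conv_ideal)
  show ?thesis
  proof (rule exI[of _ T], intro conjI ballI allI impI)
    show "T \<subseteq> D"
      unfolding T_def using s by blast
    show "T \<in> conv_ideal"
      unfolding T_def using \<open>range s \<in> conv_ideal\<close> by (rule conv_ideal_subset) blast
    show "dist (real_of_rat x) y < r" if "x \<in> T" for x
      using that unfolding T_def I_def by blast
    show "y islimpt real_of_rat ` T"
      unfolding T_def using \<open>infinite I\<close> by (rule limpt)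
    show "y islimpt real_of_rat ` (A \<inter> T)" if "infinite (A \<inter> T)" for A
    proof -
      have "A \<inter> T = s ` {k\<in>I. s k \<in> A}"
        unfolding T_def by blast
      moreover have "infinite {k\<in>I. s k \<in> A}"
        using that finite_imageI[of "{k\<in>I. s k \<in> A}" s] calculation by auto
      ultimately show ?thesis
        using limpt by simp
    qed
  qed
qed

lemma conv_positive_set_along_limpts:
  assumes D: "\<And>n. D n \<subseteq> Q01" and y_limpt: "\<And>n. y n islimpt real_of_rat ` D n"
    and y_ne: "\<And>n. y n \<noteq> w" and y_tendsto: "y \<longlonglongrightarrow> w"
  shows "\<exists>B. B \<subseteq> Q01 \<and> B \<notin> conv_ideal \<and>
    (\<forall>A. (\<forall>\<^sub>F n in sequentially. \<not> y n islimpt real_of_rat ` (A \<inter> D n)) \<longrightarrow> A \<inter> B \<in> conv_ideal)"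
proof -
  have "\<exists>T. T \<subseteq> D n \<and> T \<in> conv_ideal \<and> (\<forall>x\<in>T. dist (real_of_rat x) (y n) < inverse (real (Suc n)))
    \<and> y n islimpt real_of_rat ` T \<and> (\<forall>A. infinite (A \<inter> T) \<longrightarrow> y n islimpt real_of_rat ` (A \<inter> T))"
    for n
    by (rule conv_set_accumulating_at_limpt[OF D y_limpt]) simp
  then have "\<exists>T. \<forall>n. T n \<subseteq> D n \<and> T n \<in> conv_ideal
    \<and> (\<forall>x\<in>T n. dist (real_of_rat x) (y n) < inverse (real (Suc n)))
    \<and> y n islimpt real_of_rat ` T n \<and> (\<forall>A. infinite (A \<inter> T n) \<longrightarrow> y n islimpt real_of_rat ` (A \<inter> T n))"
    by metis
  then obtain T where T_D: "\<And>n. T n \<subseteq> D n" and T_conv: "\<And>n. T n \<in> conv_ideal"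
    and T_close: "\<And>n. \<forall>x\<in>T n. dist (real_of_rat x) (y n) < inverse (real (Suc n))"
    and T_limpt: "\<And>n. y n islimpt real_of_rat ` T n"
    and T_limpt_Int: "\<And>n A. infinite (A \<inter> T n) \<Longrightarrow> y n islimpt real_of_rat ` (A \<inter> T n)"
    by blast
  define B where "B = (\<Union>n. T n)"
  have "B \<subseteq> Q01"
    unfolding B_def using T_D D by blast
  moreover have "B \<notin> conv_ideal"
  proof (rule not_conv_ideal_if_limpts_tendsto[OF _ y_ne y_tendsto])
    show "y n islimpt real_of_rat ` B" for n
      using T_limpt by (rule islimpt_subset) (auto simp: B_def)
  qed
  moreover have "A \<inter> B \<in> conv_ideal"
    if avoid: "\<forall>\<^sub>F n in sequentially. \<not> y n islimpt real_of_rat ` (A \<inter> D n)" for A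
  proof -
    have "(\<Union>n. A \<inter> T n) \<in> conv_ideal"
    proof (rule conv_ideal_UN_if_tendsto)
      show "A \<inter> T n \<in> conv_ideal" for n
        using T_conv by (rule conv_ideal_subset) blast
      show "\<forall>\<^sub>F n in sequentially. finite (A \<inter> T n)"
        using avoid
      proof eventually_elim
        case (elim n)
        have "real_of_rat ` (A \<inter> T n) \<subseteq> real_of_rat ` (A \<inter> D n)"
          using T_D by blast
        with elim have "\<not> y n islimpt real_of_rat ` (A \<inter> T n)"
          using islimpt_subset by blast
        then show "finite (A \<inter> T n)"
          using T_limpt_Int by blast
      qed
    next
      show "\<forall>\<^sub>F n in sequentially. \<forall>x\<in>A \<inter> T n. dist (real_of_rat x) w < e" if "e > 0" for e
        by (rule eventually_dist_less_if_close[OF y_tendsto _ that]) (use T_close in blast)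
    qed
    moreover have "A \<inter> B = (\<Union>n. A \<inter> T n)"
      unfolding B_def by blast
    ultimately show ?thesis
      by simp
  qed
  ultimately show ?thesis
    by blast
qed

lemma conv_positive_sets_accumulating_limpts:
  fixes D :: "nat \<Rightarrow> rat set"
  assumes D: "\<And>n. D n \<subseteq> Q01" "\<And>n. D n \<notin> conv_ideal"
  obtains \<phi> v w where "strict_mono \<phi>"
    "\<forall>n. v n islimpt {p. p islimpt real_of_rat ` D (\<phi> n)}" "v \<longlonglongrightarrow> w"
proof -
  have "\<exists>v. v islimpt {p. p islimpt real_of_rat ` D n}" for n
  proof -
    have inf: "infinite {p. p islimpt real_of_rat ` D n}"
      using conv_ideal_iff_finite_limpts[OF D(1)[of n]] D(2)[of n] by blast
    have "{p. p islimpt real_of_rat ` D n} \<subseteq> {0..1}"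
      using limpt_in_closed[OF closed_atLeastAtMost real_of_rat_Q01[OF D(1)]] by blast
    then have bnd: "bounded {p. p islimpt real_of_rat ` D n}"
      by (rule bounded_subset[OF bounded_closed_interval])
    obtain v where "v islimpt {p. p islimpt real_of_rat ` D n}"
      by (rule bounded_infinite_imp_islimpt[OF subset_refl bnd inf])
    then show ?thesis
      by blast
  qed
  then have "\<exists>v. \<forall>n. v n islimpt {p. p islimpt real_of_rat ` D n}"
    by metis
  then obtain v :: "nat \<Rightarrow> real" where v: "\<And>n. v n islimpt {p. p islimpt real_of_rat ` D n}"
    by blast
  have "v n \<in> {0..1}" for n
    using limpt_in_closed[OF closed_atLeastAtMost real_of_rat_Q01[OF D(1)] limpt_of_limpts[OF v]] .
  then have bounded: "bounded (range v)"
    by (intro bounded_subset[OF bounded_closed_interval[of 0 1]]) auto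
  obtain \<phi> w where \<phi>: "strict_mono \<phi>" and lim: "(v \<circ> \<phi>) \<longlonglongrightarrow> w"
    using bounded_imp_convergent_subsequence[OF bounded] by blast
  have "\<forall>n. (v \<circ> \<phi>) n islimpt {p. p islimpt real_of_rat ` D (\<phi> n)}"
    using v by simp
  with \<phi> show thesis
    using lim by (rule that)
qed

lemma conv_dominated_sets_escapable_if_limpt_seqs:
  assumes D: "\<And>n. D n \<subseteq> Q01" and v: "v \<longlonglongrightarrow> w"
    and z_limpt: "\<And>n k. z n k islimpt real_of_rat ` D n" and z_ne_w: "\<And>n k. z n k \<noteq> w"
    and z_ne: "\<And>n k. z n k \<noteq> v n" and z_dist: "\<And>n k. dist (z n k) (v n) < inverse (real (Suc k))"
  shows "\<exists>f. dominated_sets_escapable Q01 conv_ideal D f"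
proof -
  have z_tendsto: "z n \<longlonglongrightarrow> v n" for n
    using tendsto_const z_dist by (rule tendsto_if_dist_less_inverse_Suc)
  define K where "K A n = {k. z n k islimpt real_of_rat ` (A \<inter> D n)}" for A n
  have K_finite: "finite (K A n)" if "A \<inter> D n \<in> conv_ideal" for A n
    using finite_vimage_if_tendsto_avoiding[OF z_tendsto z_ne finite_limpts_if_conv_ideal[OF that]]
    unfolding K_def by simp
  define f where "f A n = Suc (Max (K A n))" for A n
  have "dominated_sets_escapable Q01 conv_ideal D f"
    unfolding dominated_sets_escapable_def
  proof
    fix g :: "nat \<Rightarrow> nat"
    \<comment> \<open>Taking the index max (g n) n rather than g n is what makes y converge to w.\<close>
    define y where "y = (\<lambda>n. z n (max (g n) n))"
    have y_tendsto: "y \<longlonglongrightarrow> w"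
      unfolding y_def by (rule tendsto_diagonal_if_dist_less_inverse_Suc[OF v z_dist]) simp
    have y_limpt: "y n islimpt real_of_rat ` D n" and y_ne: "y n \<noteq> w" for n
      unfolding y_def by (simp_all add: z_limpt z_ne_w)
    obtain B where B: "B \<subseteq> Q01" "B \<notin> conv_ideal" and B_ad: "\<forall>A. (\<forall>\<^sub>F n in sequentially.
        \<not> y n islimpt real_of_rat ` (A \<inter> D n)) \<longrightarrow> A \<inter> B \<in> conv_ideal"
      using conv_positive_set_along_limpts[OF D y_limpt y_ne y_tendsto] by blast
    have "A \<inter> B \<in> conv_ideal" if "\<forall>\<^sub>F n in sequentially. A \<inter> D n \<in> conv_ideal"
      "\<forall>\<^sub>F n in sequentially. f A n \<le> g n" for A
    proof (rule B_ad[rule_format])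
      show "\<forall>\<^sub>F n in sequentially. \<not> y n islimpt real_of_rat ` (A \<inter> D n)"
        using that
      proof eventually_elim
        case (elim n)
        have "max (g n) n \<notin> K A n"
        proof
          assume "max (g n) n \<in> K A n"
          then have "max (g n) n \<le> Max (K A n)"
            by (rule Max_ge[OF K_finite[OF elim(1)]])
          then show False
            using elim(2) unfolding f_def by simp
        qed
        then show ?case
          unfolding K_def y_def by simp
      qed
    qed
    with B show "\<exists>B. positive_for Q01 conv_ideal B \<and>
      (\<forall>A. (\<forall>\<^sub>F n in sequentially. A \<inter> D n \<in> conv_ideal) \<longrightarrow>
        (\<forall>\<^sub>F n in sequentially. f A n \<le> g n) \<longrightarrow> A \<inter> B \<in> conv_ideal)"
      unfolding positive_for_def by blast
  qed
  then show ?thesis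
    by blast
qed

lemma conv_dominated_sets_escapable:
  assumes D: "\<And>n. D n \<subseteq> Q01"
    and v: "\<And>n. v n islimpt {p. p islimpt real_of_rat ` D n}" "v \<longlonglongrightarrow> w"
  shows "\<exists>f. dominated_sets_escapable Q01 conv_ideal D f"
proof -
  have "\<exists>z. \<forall>k. z k \<in> {p. p islimpt real_of_rat ` D n} - {w} \<and> z k \<noteq> v n
           \<and> dist (z k) (v n) < inverse (real (Suc k))" for n
  proof -
    have "v n islimpt insert w ({p. p islimpt real_of_rat ` D n} - {w})"
      by (rule islimpt_subset[OF v(1)]) blast
    then have "v n islimpt (\<lambda>x. x) ` ({p. p islimpt real_of_rat ` D n} - {w})"
      by (simp only: islimpt_insert image_ident)
    then show ?thesis
      by (rule islimpt_image_approximating_seq)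
  qed
  then have "\<exists>z. \<forall>n k. z n k \<in> {p. p islimpt real_of_rat ` D n} - {w} \<and> z n k \<noteq> v n
           \<and> dist (z n k) (v n) < inverse (real (Suc k))"
    by metis
  then obtain z where "\<And>n k. z n k islimpt real_of_rat ` D n" "\<And>n k. z n k \<noteq> w"
    "\<And>n k. z n k \<noteq> v n" "\<And>n k. dist (z n k) (v n) < inverse (real (Suc k))"
    by blast
  with D v(2) show ?thesis
    by (rule conv_dominated_sets_escapable_if_limpt_seqs)
qed

theorem mainTheorem3:
  assumes "uncountable_MAD Q01 conv_ideal \<A>"
  shows "\<exists>F. unbounded_family F \<and> (card_of F, card_of \<A>) \<in> ordLeq"
proof -
  have unc: "\<not> countable \<A>" and pos: "\<forall>A\<in>\<A>. positive_for Q01 conv_ideal A"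
    and ad: "\<forall>A\<in>\<A>. \<forall>B\<in>\<A>. A \<noteq> B \<longrightarrow> A \<inter> B \<in> conv_ideal"
    using assms unfolding uncountable_MAD_def by blast+
  have inf: "infinite \<A>"
    using unc countable_finite by blast
  obtain D where D: "\<forall>n. positive_for Q01 conv_ideal (D n)"
    and small: "\<forall>A\<in>\<A>. \<forall>\<^sub>F n in sequentially. A \<inter> D n \<in> conv_ideal"
    by (rule almost_disjoint_family_pieces[OF set_ideal_conv_ideal inf pos ad])
  have D_Q01: "D n \<subseteq> Q01" and D_pos: "D n \<notin> conv_ideal" for n
    using D unfolding positive_for_def by blast+
  obtain \<phi> v w where \<phi>: "strict_mono \<phi>"
    and v: "\<forall>n. v n islimpt {p. p islimpt real_of_rat ` D (\<phi> n)}" "v \<longlonglongrightarrow> w"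
    by (rule conv_positive_sets_accumulating_limpts[of D, OF D_Q01 D_pos])
  have "\<exists>f. dominated_sets_escapable Q01 conv_ideal (\<lambda>n. D (\<phi> n)) f"
    by (rule conv_dominated_sets_escapable[of "\<lambda>n. D (\<phi> n)", OF D_Q01 v(1)[rule_format] v(2)])
  then obtain f where f: "dominated_sets_escapable Q01 conv_ideal (\<lambda>n. D (\<phi> n)) f"
    by blast
  have "\<forall>A\<in>\<A>. \<forall>\<^sub>F n in sequentially. A \<inter> D (\<phi> n) \<in> conv_ideal"
  proof
    fix A assume "A \<in> \<A>"
    then show "\<forall>\<^sub>F n in sequentially. A \<inter> D (\<phi> n) \<in> conv_ideal"
      by (rule eventually_subseq[OF \<phi> small[rule_format]])
  qed
  then have "unbounded_family (f ` \<A>)"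
    by (rule unbounded_family_if_dominated_sets_escapable[OF assms _ f])
  then show ?thesis
    using card_of_image[of f \<A>] by blast
qed

end
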